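(* Let $(\mathfrak g,\mathfrak g_1,\mathfrak g_2)$ be a quasi-double Lie algebra with maps $\psi,\mu$, and for $x\in\mathfrak g_2$, $\xi\in\mathfrak g_1$ let $x^\xi\in\mathfrak g_2$ denote the $\mathfrak g_2$-component of $[x,\xi]_{\mathfrak g}$ in the decomposition $\mathfrak g=\mathfrak g_1\oplus\mathfrak g_2$. Define $[x,y]_{\mathfrak g_2}=\mu(x,y)$ and $\langle x,y,z\rangle=\frac12\,x^{\psi(y,z)}$ for $x,y,z\in\mathfrak g_2$. Then $(\mathfrak g_2,[\cdot,\cdot]_{\mathfrak g_2},\langle\cdot,\cdot,\cdot\rangle)$ is an Akivis algebra.
   Context: A quasi-double Lie algebra is a triple $(\mathfrak g,\mathfrak g_1,\mathfrak g_2)$ where $\mathfrak g$ is a Lie algebra, $\mathfrak g_1$ a Lie subalgebra, and $\mathfrak g_2$ a linear subspace equipped with antisymmetric bilinear maps $\psi:\Lambda^2\mathfrak g_2\to\mathfrak g_1$, $\mu:\Lambda^2\mathfrak g_2\to\mathfrak g_2$ such that $\mathfrak g=\mathfrak g_1\oplus\mathfrak g_2$ as vector spaces and $[x,y]_{\mathfrak g}=\psi(x,y)+\mu(x,y)$ for all $x,y\in\mathfrak g_2$. An Akivis algebra $(A,[\cdot,\cdot],\langle\cdot,\cdot,\cdot\rangle)$ is a vector space $A$ with an antisymmetric bilinear map $[\cdot,\cdot]:A\times A\to A$ and a trilinear map $\langle\cdot,\cdot,\cdot\rangle:A\times A\times A\to A$ such that $\sum_{\sigma\in S_3}\mathrm{sign}(\sigma)\langle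 x_{\sigma(1)},x_{\sigma(2)},x_{\sigma(3)}\rangle=\sum_{\circlearrowleft}[[x_1,x_2],x_3]$ for all $x_1,x_2,x_3\in A$, the right side being the sum over cyclic permutations of $(x_1,x_2,x_3)$. *)

theory Defs
  imports Complex_Main
begin

text \<open>All structures live in an ambient vector space over a field 'k, given by a
scalar multiplication scale :: 'k => 'v => 'v (library locale vector_space).\<close>

definition bilinear_on :: "('k::field \<Rightarrow> 'v::ab_group_add \<Rightarrow> 'v) \<Rightarrow> 'v set \<Rightarrow> ('v \<Rightarrow> 'v \<Rightarrow> 'v) \<Rightarrow> bool" where
  "bilinear_on scale A f \<longleftrightarrow>
     (\<forall>x\<in>A. \<forall>y\<in>A. \<forall>z\<in>A. \<forall>c.
        f (x + y) z = f x z + f y z \<and> f x (y + z) = f x y + f x z \<and>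
        f (scale c x) y = scale c (f x y) \<and> f x (scale c y) = scale c (f x y))"

definition trilinear_on :: "('k::field \<Rightarrow> 'v::ab_group_add \<Rightarrow> 'v) \<Rightarrow> 'v set \<Rightarrow> ('v \<Rightarrow> 'v \<Rightarrow> 'v \<Rightarrow> 'v) \<Rightarrow> bool" where
  "trilinear_on scale A t \<longleftrightarrow>
     (\<forall>x\<in>A. \<forall>y\<in>A. \<forall>z\<in>A. \<forall>w\<in>A. \<forall>c.
        t (x + w) y z = t x y z + t w y z \<and>
        t x (y + w) z = t x y z + t x w z \<and>
        t x y (z + w) = t x y z + t x y w \<and>
        t (scale c x) y z = scale c (t x y z) \<and>
        t x (scale c y) z = scale c (t x y z) \<and>
        t x y (scale c z) = scale c (t x y z))"

definition antisymmetric_on :: "'v set \<Rightarrow> ('v \<Rightarrow> 'v \<Rightarrow> 'v::ab_group_add) \<Rightarrow> bool" where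
  "antisymmetric_on A f \<longleftrightarrow> (\<forall>x\<in>A. \<forall>y\<in>A. f x y = - f y x)"

definition lie_algebra :: "('k::field \<Rightarrow> 'v::ab_group_add \<Rightarrow> 'v) \<Rightarrow> ('v \<Rightarrow> 'v \<Rightarrow> 'v) \<Rightarrow> bool" where
  "lie_algebra scale br \<longleftrightarrow>
     vector_space scale \<and> bilinear_on scale UNIV br \<and> (\<forall>x. br x x = 0) \<and>
     (\<forall>x y z. br x (br y z) + br y (br z x) + br z (br x y) = 0)"

text \<open>Quasi-double Lie algebra (g, g1, g2) with maps psi, mu; g is the ambient space.\<close>
definition quasi_double_lie_algebra ::
  "('k::field \<Rightarrow> 'v::ab_group_add \<Rightarrow> 'v) \<Rightarrow> ('v \<Rightarrow> 'v \<Rightarrow> 'v) \<Rightarrow> 'v set \<Rightarrow> 'v set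
    \<Rightarrow> ('v \<Rightarrow> 'v \<Rightarrow> 'v) \<Rightarrow> ('v \<Rightarrow> 'v \<Rightarrow> 'v) \<Rightarrow> bool" where
  "quasi_double_lie_algebra scale br g1 g2 \<psi> \<mu> \<longleftrightarrow>
     lie_algebra scale br \<and>
     module.subspace scale g1 \<and> (\<forall>x\<in>g1. \<forall>y\<in>g1. br x y \<in> g1) \<and>
     module.subspace scale g2 \<and>
     g1 \<inter> g2 = {0} \<and> (\<forall>v. \<exists>a\<in>g1. \<exists>b\<in>g2. v = a + b) \<and>
     bilinear_on scale g2 \<psi> \<and> antisymmetric_on g2 \<psi> \<and> (\<forall>x\<in>g2. \<forall>y\<in>g2. \<psi> x y \<in> g1) \<and>
     bilinear_on scale g2 \<mu> \<and> antisymmetric_on g2 \<mu> \<and> (\<forall>x\<in>g2. \<forall>y\<in>g2. \<mu> x y \<in> g2) \<and>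
     (\<forall>x\<in>g2. \<forall>y\<in>g2. br x y = \<psi> x y + \<mu> x y)"

definition proj2 :: "'v set \<Rightarrow> 'v set \<Rightarrow> 'v::ab_group_add \<Rightarrow> 'v" where
  "proj2 g1 g2 v = (THE b. b \<in> g2 \<and> v - b \<in> g1)"

definition akivis_algebra ::
  "('k::field \<Rightarrow> 'v::ab_group_add \<Rightarrow> 'v) \<Rightarrow> 'v set \<Rightarrow> ('v \<Rightarrow> 'v \<Rightarrow> 'v) \<Rightarrow> ('v \<Rightarrow> 'v \<Rightarrow> 'v \<Rightarrow> 'v) \<Rightarrow> bool" where
  "akivis_algebra scale A brk tri \<longleftrightarrow>
     module.subspace scale A \<and>
     (\<forall>x\<in>A. \<forall>y\<in>A. brk x y \<in> A) \<and> bilinear_on scale A brk \<and> antisymmetric_on A brk \<and>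
     (\<forall>x\<in>A. \<forall>y\<in>A. \<forall>z\<in>A. tri x y z \<in> A) \<and> trilinear_on scale A tri \<and>
     (\<forall>x1\<in>A. \<forall>x2\<in>A. \<forall>x3\<in>A.
        tri x1 x2 x3 - tri x1 x3 x2 - tri x2 x1 x3 + tri x2 x3 x1 + tri x3 x1 x2 - tri x3 x2 x1
        = brk (brk x1 x2) x3 + brk (brk x2 x3) x1 + brk (brk x3 x1) x2)"

end

theory Submission
  imports Defs
begin

text \<open>Write \<open>P\<close> for the projection onto g2 along g1. Antisymmetry of \<open>\<psi>\<close> gives
  \<open>\<langle>x,y,z\<rangle> - \<langle>x,z,y\<rangle> = P[x,\<psi>(y,z)]\<close>, so the alternating sum in the Akivis identity is the
  cyclic sum of \<open>P[x,\<psi>(y,z)]\<close>. Applying \<open>P\<close> to the Jacobi identity and splitting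
  \<open>[y,z] = \<psi>(y,z) + \<mu>(y,z)\<close>, the \<open>\<mu>\<close>-parts contribute \<open>P[x,\<mu>(y,z)] = \<mu>(x,\<mu>(y,z))\<close>, because
  \<open>P[u,w] = \<mu>(u,w)\<close> for \<open>u, w\<close> in g2; hence the cyclic sum of \<open>P[x,\<psi>(y,z)]\<close> is the cyclic sum
  of \<open>\<mu>(\<mu>(y,z),x)\<close>.\<close>

locale complementary_subspaces = vector_space scale
  for scale :: "'k::field \<Rightarrow> 'v::ab_group_add \<Rightarrow> 'v" +
  fixes g1 g2 :: "'v set"
  assumes subspace_g1: "subspace g1" and subspace_g2: "subspace g2"
    and inter_eq_zero: "g1 \<inter> g2 = {0}"
    and sum_eq_UNIV: "\<forall>v. \<exists>a\<in>g1. \<exists>b\<in>g2. v = a + b"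
begin

lemma proj2_eqI:
  assumes "b \<in> g2" and "v - b \<in> g1"
  shows "proj2 g1 g2 v = b"
  unfolding proj2_def
proof (rule the_equality)
  show "b \<in> g2 \<and> v - b \<in> g1" using assms ..
  fix b' assume b': "b' \<in> g2 \<and> v - b' \<in> g1"
  have "b - b' \<in> g2" using assms b' subspace_g2 by (simp add: subspace_diff)
  moreover have "b - b' = (v - b') - (v - b)" by simp
  then have "b - b' \<in> g1" using assms b' subspace_g1 by (metis subspace_diff)
  ultimately have "b - b' \<in> g1 \<inter> g2" by blast
  then show "b' = b" using inter_eq_zero by simp
qed

lemma proj2_mem: "proj2 g1 g2 v \<in> g2"
  and diff_proj2_mem: "v - proj2 g1 g2 v \<in> g1"
proof -
  obtain a b where "a \<in> g1" "b \<in> g2" "v = a + b" using sum_eq_UNIV by blast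
  then have "proj2 g1 g2 v = b" by (simp add: proj2_eqI)
  with \<open>a \<in> g1\<close> \<open>b \<in> g2\<close> \<open>v = a + b\<close>
  show "proj2 g1 g2 v \<in> g2" and "v - proj2 g1 g2 v \<in> g1" by simp_all
qed

lemma proj2_add: "proj2 g1 g2 (u + v) = proj2 g1 g2 u + proj2 g1 g2 v"
proof (rule proj2_eqI)
  show "proj2 g1 g2 u + proj2 g1 g2 v \<in> g2"
    by (simp add: proj2_mem subspace_add subspace_g2)
  have "u + v - (proj2 g1 g2 u + proj2 g1 g2 v)
      = (u - proj2 g1 g2 u) + (v - proj2 g1 g2 v)" by simp
  then show "u + v - (proj2 g1 g2 u + proj2 g1 g2 v) \<in> g1"
    by (metis diff_proj2_mem subspace_add subspace_g1)
qed

lemma proj2_scale: "proj2 g1 g2 (scale c v) = scale c (proj2 g1 g2 v)"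
proof (rule proj2_eqI)
  show "scale c (proj2 g1 g2 v) \<in> g2" by (simp add: proj2_mem subspace_scale subspace_g2)
  have "scale c v - scale c (proj2 g1 g2 v) = scale c (v - proj2 g1 g2 v)"
    by (simp add: scale_right_diff_distrib)
  then show "scale c v - scale c (proj2 g1 g2 v) \<in> g1"
    by (metis diff_proj2_mem subspace_scale subspace_g1)
qed

lemma proj2_minus: "proj2 g1 g2 (- v) = - proj2 g1 g2 v"
proof (rule proj2_eqI)
  show "- proj2 g1 g2 v \<in> g2" by (simp add: proj2_mem subspace_neg subspace_g2)
  show "- v - - proj2 g1 g2 v \<in> g1"
    using subspace_neg[OF subspace_g1 diff_proj2_mem[of v]] by simp
qed

lemma proj2_g1: "a \<in> g1 \<Longrightarrow> proj2 g1 g2 a = 0"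
  by (rule proj2_eqI) (simp_all add: subspace_0 subspace_g2)

lemma proj2_g2: "b \<in> g2 \<Longrightarrow> proj2 g1 g2 b = b"
  by (rule proj2_eqI) (simp_all add: subspace_0 subspace_g1)

end

context vector_space
begin

lemma bilinear_on_minus_right:
  assumes "bilinear_on scale A f" and "x \<in> A" and "y \<in> A"
  shows "f x (- y) = - f x y"
proof -
  have "f x (scale (-1) y) = scale (-1) (f x y)"
    using assms unfolding bilinear_on_def by blast
  then show ?thesis by simp
qed

lemma trilinear_on_bracket_comp:
  assumes "bilinear_on scale UNIV br" and "bilinear_on scale A \<psi>"
    and "\<And>u v. P (u + v) = P u + P v" and "\<And>c u. P (scale c u) = scale c (P u)"
  shows "trilinear_on scale A (\<lambda>x y z. scale a (P (br x (\<psi> y z))))"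
  using assms unfolding trilinear_on_def bilinear_on_def
  by (auto simp: scale_right_distrib mult.commute)

end

locale quasi_double =
  fixes scale :: "'k::field \<Rightarrow> 'v::ab_group_add \<Rightarrow> 'v"
    and br :: "'v \<Rightarrow> 'v \<Rightarrow> 'v"
    and g1 g2 :: "'v set"
    and \<psi> \<mu> :: "'v \<Rightarrow> 'v \<Rightarrow> 'v"
  assumes quasi_double_lie_algebra: "quasi_double_lie_algebra scale br g1 g2 \<psi> \<mu>"
begin

sublocale complementary_subspaces scale g1 g2
  using quasi_double_lie_algebra
  unfolding quasi_double_lie_algebra_def lie_algebra_def complementary_subspaces_def
    complementary_subspaces_axioms_def
  by simp

lemma bilinear_br: "bilinear_on scale UNIV br"
  and jacobi: "br x (br y z) + br y (br z x) + br z (br x y) = 0"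
  using quasi_double_lie_algebra unfolding quasi_double_lie_algebra_def lie_algebra_def
  by simp_all

lemma br_add_right: "br x (y + z) = br x y + br x z"
  using bilinear_br unfolding bilinear_on_def by blast

lemma bilinear_\<psi>: "bilinear_on scale g2 \<psi>"
  and antisymmetric_\<psi>: "antisymmetric_on g2 \<psi>"
  and \<psi>_mem: "x \<in> g2 \<Longrightarrow> y \<in> g2 \<Longrightarrow> \<psi> x y \<in> g1"
  and bilinear_\<mu>: "bilinear_on scale g2 \<mu>"
  and antisymmetric_\<mu>: "antisymmetric_on g2 \<mu>"
  and \<mu>_mem: "x \<in> g2 \<Longrightarrow> y \<in> g2 \<Longrightarrow> \<mu> x y \<in> g2"
  and br_g2: "x \<in> g2 \<Longrightarrow> y \<in> g2 \<Longrightarrow> br x y = \<psi> x y + \<mu> x y"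
  using quasi_double_lie_algebra unfolding quasi_double_lie_algebra_def by simp_all

lemma \<psi>_antisym: "x \<in> g2 \<Longrightarrow> y \<in> g2 \<Longrightarrow> \<psi> x y = - \<psi> y x"
  using antisymmetric_\<psi> unfolding antisymmetric_on_def by blast

lemma \<mu>_antisym: "x \<in> g2 \<Longrightarrow> y \<in> g2 \<Longrightarrow> \<mu> x y = - \<mu> y x"
  using antisymmetric_\<mu> unfolding antisymmetric_on_def by blast

lemma proj2_br_g2:
  assumes "x \<in> g2" and "y \<in> g2"
  shows "proj2 g1 g2 (br x y) = \<mu> x y"
  using assms by (simp add: br_g2 proj2_add proj2_g1 proj2_g2 \<psi>_mem \<mu>_mem)

lemma cyclic_proj2_br_\<psi>:
  assumes "x \<in> g2" and "y \<in> g2" and "z \<in> g2"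
  shows "proj2 g1 g2 (br x (\<psi> y z)) + proj2 g1 g2 (br y (\<psi> z x)) + proj2 g1 g2 (br z (\<psi> x y))
    = \<mu> (\<mu> x y) z + \<mu> (\<mu> y z) x + \<mu> (\<mu> z x) y"
proof -
  have br_br: "br u (br v w) = br u (\<psi> v w) + br u (\<mu> v w)" if "v \<in> g2" "w \<in> g2" for u v w
    using that by (simp add: br_g2 br_add_right)
  have "0 = proj2 g1 g2 (br x (br y z) + br y (br z x) + br z (br x y))"
    by (simp add: jacobi proj2_g1 subspace_0 subspace_g1)
  also have "\<dots> = proj2 g1 g2 (br x (\<psi> y z)) + proj2 g1 g2 (br y (\<psi> z x))
      + proj2 g1 g2 (br z (\<psi> x y)) + (\<mu> x (\<mu> y z) + \<mu> y (\<mu> z x) + \<mu> z (\<mu> x y))"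
    using assms by (simp add: br_br proj2_add proj2_br_g2 \<mu>_mem algebra_simps)
  finally have "proj2 g1 g2 (br x (\<psi> y z)) + proj2 g1 g2 (br y (\<psi> z x))
      + proj2 g1 g2 (br z (\<psi> x y)) + (\<mu> x (\<mu> y z) + \<mu> y (\<mu> z x) + \<mu> z (\<mu> x y)) = 0" ..
  moreover have "\<mu> x (\<mu> y z) = - \<mu> (\<mu> y z) x" "\<mu> y (\<mu> z x) = - \<mu> (\<mu> z x) y"
    "\<mu> z (\<mu> x y) = - \<mu> (\<mu> x y) z"
    using assms by (meson \<mu>_antisym \<mu>_mem)+
  ultimately show ?thesis by (simp add: algebra_simps eq_neg_iff_add_eq_0[symmetric])
qed

abbreviation triple :: "'v \<Rightarrow> 'v \<Rightarrow> 'v \<Rightarrow> 'v" where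
  "triple x y z \<equiv> scale (1/2) (proj2 g1 g2 (br x (\<psi> y z)))"

lemma triple_mem: "triple x y z \<in> g2"
  by (simp add: proj2_mem subspace_scale subspace_g2)

lemma trilinear_triple: "trilinear_on scale g2 triple"
  by (rule trilinear_on_bracket_comp[OF bilinear_br bilinear_\<psi> proj2_add proj2_scale])

lemma triple_diff_swap:
  assumes "(2::'k) \<noteq> 0" and "y \<in> g2" and "z \<in> g2"
  shows "triple x y z - triple x z y = proj2 g1 g2 (br x (\<psi> y z))"
proof -
  have "(1/2::'k) + 1/2 = 1" using assms(1) by (simp add: field_simps)
  then have half: "scale (1/2) u + scale (1/2) u = u" for u
    by (metis scale_left_distrib scale_one)
  have "br x (\<psi> z y) = - br x (\<psi> y z)"
    using assms(2,3) by (simp add: \<psi>_antisym[of z y] bilinear_on_minus_right[OF bilinear_br])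
  then show ?thesis by (simp add: proj2_minus half)
qed

lemma akivis_identity:
  assumes "(2::'k) \<noteq> 0" and "x1 \<in> g2" and "x2 \<in> g2" and "x3 \<in> g2"
  shows "triple x1 x2 x3 - triple x1 x3 x2 - triple x2 x1 x3 + triple x2 x3 x1
      + triple x3 x1 x2 - triple x3 x2 x1
    = \<mu> (\<mu> x1 x2) x3 + \<mu> (\<mu> x2 x3) x1 + \<mu> (\<mu> x3 x1) x2"
proof -
  have "triple x1 x2 x3 - triple x1 x3 x2 - triple x2 x1 x3 + triple x2 x3 x1
      + triple x3 x1 x2 - triple x3 x2 x1
    = (triple x1 x2 x3 - triple x1 x3 x2) + (triple x2 x3 x1 - triple x2 x1 x3)
      + (triple x3 x1 x2 - triple x3 x2 x1)"
    by (simp add: algebra_simps)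
  also have "\<dots> = proj2 g1 g2 (br x1 (\<psi> x2 x3)) + proj2 g1 g2 (br x2 (\<psi> x3 x1))
      + proj2 g1 g2 (br x3 (\<psi> x1 x2))"
    using assms by (simp add: triple_diff_swap)
  also have "\<dots> = \<mu> (\<mu> x1 x2) x3 + \<mu> (\<mu> x2 x3) x1 + \<mu> (\<mu> x3 x1) x2"
    using assms(2-4) by (rule cyclic_proj2_br_\<psi>)
  finally show ?thesis .
qed

end

theorem mainTheorem4:
  fixes scale :: "'k::field \<Rightarrow> 'v::ab_group_add \<Rightarrow> 'v"
    and br :: "'v \<Rightarrow> 'v \<Rightarrow> 'v"
    and g1 g2 :: "'v set"
    and \<psi> \<mu> :: "'v \<Rightarrow> 'v \<Rightarrow> 'v"
  assumes "quasi_double_lie_algebra scale br g1 g2 \<psi> \<mu>"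
    and "(2::'k) \<noteq> 0"
  shows "akivis_algebra scale g2 \<mu>
           (\<lambda>x y z. scale (1/2) (proj2 g1 g2 (br x (\<psi> y z))))"
proof -
  interpret quasi_double scale br g1 g2 \<psi> \<mu> by unfold_locales (fact assms(1))
  show ?thesis
    unfolding akivis_algebra_def
    by (simp add: subspace_g2 \<mu>_mem bilinear_\<mu> antisymmetric_\<mu> triple_mem trilinear_triple
        akivis_identity[OF assms(2)])
qed

end
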